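(* Let $X$ be a compact metrizable space and let $\{U_i\}_{i\in I}$ be a covering of $X$ by open sets. Suppose that for each $i\in I$, $\ell_i$ is a positive log-scale on $\overline{U_i}$ such that for every pair $i,j\in I$ the log-scales $\ell_i$ and $\ell_j$ are Lipschitz equivalent on $\overline{U_i}\cap\overline{U_j}$. Then there is a log-scale $\ell$ on $X$ such that $\ell$ is Lipschitz equivalent to $\ell_i$ on $\overline{U_i}$ for every $i\in I$.
   Context: A log-scale on a set $Y$ is a function $\ell:Y\times Y\to\mathbb{R}\cup\{\infty\}$ such that $\ell(x,y)=\ell(y,x)$, $\ell(x,y)=+\infty$ iff $x=y$, and for some $\delta\ge0$, $\ell(x,z)\ge\min(\ell(x,y),\ell(y,z))-\delta$ for all $x,y,z$. A log-scale on a topological space is assumed to define its topology (via a metric $|\cdot|$ with $c^{-1}\alpha^{\ell(x,y)}\le|x-y|\le c\alpha^{\ell(x,y)}$ for constants $0<\alpha<1$, $c>1$). A log-scale is positive if all its values are positive. Two log-scales $\ell,\ell'$ on a set are Lipschitz equivalent if $|\ell(x,y)-\ell'(x,y)|$ is bounded by a constant for all $x,y$. *)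

theory Defs
  imports "HOL-Analysis.Analysis"
begin

text \<open>Log-scales take values in \<real> \<union> {\<infinity>}; we use ereal values excluding -\<infinity>.\<close>

definition log_scale_on :: "'a set \<Rightarrow> ('a \<Rightarrow> 'a \<Rightarrow> ereal) \<Rightarrow> bool" where
  "log_scale_on Y l \<longleftrightarrow>
     (\<forall>x\<in>Y. \<forall>y\<in>Y. l x y = l y x \<and> l x y \<noteq> -\<infinity> \<and> (l x y = \<infinity> \<longleftrightarrow> x = y)) \<and>
     (\<exists>\<delta>::real. \<delta> \<ge> 0 \<and> (\<forall>x\<in>Y. \<forall>y\<in>Y. \<forall>z\<in>Y. l x z \<ge> min (l x y) (l y z) - ereal \<delta>))"

definition epow :: "real \<Rightarrow> ereal \<Rightarrow> real" where
  "epow \<alpha> e = (case e of ereal r \<Rightarrow> \<alpha> powr r | _ \<Rightarrow> 0)"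

definition top_log_scale :: "'a topology \<Rightarrow> ('a \<Rightarrow> 'a \<Rightarrow> ereal) \<Rightarrow> bool" where
  "top_log_scale T l \<longleftrightarrow> log_scale_on (topspace T) l \<and>
     (\<exists>d \<alpha> c. Metric_space (topspace T) d \<and> Metric_space.mtopology (topspace T) d = T \<and>
        0 < \<alpha> \<and> \<alpha> < 1 \<and> c > 1 \<and>
        (\<forall>x\<in>topspace T. \<forall>y\<in>topspace T.
            epow \<alpha> (l x y) / c \<le> d x y \<and> d x y \<le> c * epow \<alpha> (l x y)))"

definition positive_log_scale_on :: "'a set \<Rightarrow> ('a \<Rightarrow> 'a \<Rightarrow> ereal) \<Rightarrow> bool" where
  "positive_log_scale_on Y l \<longleftrightarrow> (\<forall>x\<in>Y. \<forall>y\<in>Y. l x y > 0)"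

definition lipschitz_equiv_on :: "'a set \<Rightarrow> ('a \<Rightarrow> 'a \<Rightarrow> ereal) \<Rightarrow> ('a \<Rightarrow> 'a \<Rightarrow> ereal) \<Rightarrow> bool" where
  "lipschitz_equiv_on S l l' \<longleftrightarrow>
     (\<exists>C::real. \<forall>x\<in>S. \<forall>y\<in>S. l x y \<le> l' x y + ereal C \<and> l' x y \<le> l x y + ereal C)"

end

theory Submission
  imports Defs
begin

text \<open>
  Pass to a finite subcover and glue: for points x, y lying in a common closed chart put
  l x y := L k x y for one such chart k, and l x y := 0 otherwise. The charts agree up to a
  bounded error on overlaps, and by a Lebesgue number argument x, y, z lie in a common chart
  as soon as l x y and l y z are large; hence l is a log-scale, Lipschitz equivalent to every
  L i. It defines the topology of X by Frink's metrization lemma: for \<alpha> < 1 close enough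
  to 1, \<rho> = \<alpha>^l satisfies \<rho> x w \<le> 2 max (\<rho> x y) (\<rho> y z) (\<rho> z w), so the infimum of the
  \<rho>-lengths of chains is a metric between \<rho>/2 and \<rho>. Compactness of the charts makes
  large values of l correspond to uniformly small distances in X.
\<close>

section \<open>Frink's metrization lemma\<close>

lemma sum_split_at_half:
  fixes f :: "nat \<Rightarrow> real"
  assumes "n > 0" and nonneg: "\<And>i. i < n \<Longrightarrow> f i \<ge> 0"
  obtains k where "k < n" "2 * (\<Sum>i<k. f i) \<le> (\<Sum>i<n. f i)"
    "2 * (\<Sum>i\<in>{Suc k..<n}. f i) \<le> (\<Sum>i<n. f i)"
proof -
  define s where "s = (\<Sum>i<n. f i)"
  define K where "K = {k. k < n \<and> 2 * (\<Sum>i<k. f i) \<le> s}"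
  have "s \<ge> 0" unfolding s_def using nonneg by (intro sum_nonneg) auto
  then have "0 \<in> K" using \<open>n > 0\<close> unfolding K_def by simp
  have "finite K" unfolding K_def by simp
  define k where "k = Max K"
  have "k \<in> K" unfolding k_def using \<open>finite K\<close> \<open>0 \<in> K\<close> Max_in by blast
  then have "k < n" and head: "2 * (\<Sum>i<k. f i) \<le> s" unfolding K_def by auto
  have "2 * (\<Sum>i\<in>{Suc k..<n}. f i) \<le> s"
  proof (cases "Suc k < n")
    case True
    have "Suc k \<notin> K" using Max_ge[OF \<open>finite K\<close>, of "Suc k"] unfolding k_def by auto
    then have "2 * (\<Sum>i<Suc k. f i) > s" using True unfolding K_def by auto
    moreover have "s = (\<Sum>i<Suc k. f i) + (\<Sum>i\<in>{Suc k..<n}. f i)"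
      unfolding s_def lessThan_atLeast0 using sum.atLeastLessThan_concat[of 0 "Suc k" n f] \<open>k < n\<close> by simp
    ultimately show ?thesis by linarith
  qed (use \<open>s \<ge> 0\<close> in simp)
  with \<open>k < n\<close> head show thesis using that unfolding s_def by blast
qed

definition chain_lengths :: "'a set \<Rightarrow> ('a \<Rightarrow> 'a \<Rightarrow> real) \<Rightarrow> 'a \<Rightarrow> 'a \<Rightarrow> real set" where
  "chain_lengths S \<rho> x y =
     {(\<Sum>k<n. \<rho> (z k) (z (Suc k))) | n z. z 0 = x \<and> z n = y \<and> (\<forall>k\<le>n. z k \<in> S)}"

definition chain_metric :: "'a set \<Rightarrow> ('a \<Rightarrow> 'a \<Rightarrow> real) \<Rightarrow> 'a \<Rightarrow> 'a \<Rightarrow> real" where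
  "chain_metric S \<rho> x y = (if x \<in> S \<and> y \<in> S then Inf (chain_lengths S \<rho> x y) else 0)"

lemma chain_lengths_single: "\<lbrakk>x \<in> S; y \<in> S\<rbrakk> \<Longrightarrow> \<rho> x y \<in> chain_lengths S \<rho> x y"
  unfolding chain_lengths_def
  by (intro CollectI exI[of _ 1] exI[of _ "\<lambda>k. if k = 0 then x else y"]) auto

lemma chain_lengths_reverse:
  assumes symm: "\<And>x y. \<lbrakk>x \<in> S; y \<in> S\<rbrakk> \<Longrightarrow> \<rho> x y = \<rho> y x"
    and "s \<in> chain_lengths S \<rho> x y"
  shows "s \<in> chain_lengths S \<rho> y x"
proof -
  obtain n z where s: "s = (\<Sum>k<n. \<rho> (z k) (z (Suc k)))"
    and z: "z 0 = x" "z n = y" "\<forall>k\<le>n. z k \<in> S"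
    using assms(2) unfolding chain_lengths_def by blast
  define z' where "z' k = z (n - k)" for k
  have "(\<Sum>k<n. \<rho> (z' k) (z' (Suc k))) = (\<Sum>k<n. \<rho> (z (n - Suc k)) (z (Suc (n - Suc k))))"
  proof (rule sum.cong)
    fix k assume "k \<in> {..<n}"
    then have "n - k = Suc (n - Suc k)" by auto
    then show "\<rho> (z' k) (z' (Suc k)) = \<rho> (z (n - Suc k)) (z (Suc (n - Suc k)))"
      unfolding z'_def using symm z(3) by (metis diff_le_self)
  qed simp
  also have "\<dots> = s" unfolding s by (rule sum.nat_diff_reindex)
  finally show ?thesis unfolding chain_lengths_def using z unfolding z'_def by force
qed

lemma chain_lengths_append:
  assumes "s \<in> chain_lengths S \<rho> x y" "t \<in> chain_lengths S \<rho> y w"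
  shows "s + t \<in> chain_lengths S \<rho> x w"
proof -
  obtain n z where s: "s = (\<Sum>k<n. \<rho> (z k) (z (Suc k)))"
    and z: "z 0 = x" "z n = y" "\<forall>k\<le>n. z k \<in> S"
    using assms(1) unfolding chain_lengths_def by blast
  obtain p v where t: "t = (\<Sum>k<p. \<rho> (v k) (v (Suc k)))"
    and v: "v 0 = y" "v p = w" "\<forall>k\<le>p. v k \<in> S"
    using assms(2) unfolding chain_lengths_def by blast
  define c where "c k = (if k \<le> n then z k else v (k - n))" for k
  have "(\<Sum>k<n+p. \<rho> (c k) (c (Suc k)))
      = (\<Sum>k<n. \<rho> (c k) (c (Suc k))) + (\<Sum>k\<in>{n..<n+p}. \<rho> (c k) (c (Suc k)))"
    unfolding lessThan_atLeast0 by (simp add: sum.atLeastLessThan_concat)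
  also have "(\<Sum>k<n. \<rho> (c k) (c (Suc k))) = s" unfolding s c_def by (rule sum.cong) auto
  also have "(\<Sum>k\<in>{n..<n+p}. \<rho> (c k) (c (Suc k))) = (\<Sum>k<p. \<rho> (c (n+k)) (c (Suc (n+k))))"
    unfolding sum.atLeastLessThan_shift_0[of _ n] lessThan_atLeast0 by simp
  also have "\<dots> = t" unfolding t c_def
    by (rule sum.cong) (use z v in \<open>auto simp: Suc_diff_le\<close>)
  finally have "(\<Sum>k<n+p. \<rho> (c k) (c (Suc k))) = s + t" .
  moreover have "c 0 = x" "c (n+p) = w" "\<forall>k\<le>n+p. c k \<in> S"
    using z v unfolding c_def by auto
  ultimately show ?thesis unfolding chain_lengths_def
    by (intro CollectI exI[of _ "n+p"] exI[of _ c]) simp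
qed

context
  fixes S :: "'a set" and \<rho> :: "'a \<Rightarrow> 'a \<Rightarrow> real"
  assumes four_point: "\<And>x y z w. \<lbrakk>x \<in> S; y \<in> S; z \<in> S; w \<in> S\<rbrakk> \<Longrightarrow>
            \<rho> x w \<le> 2 * max (\<rho> x y) (max (\<rho> y z) (\<rho> z w))"
    and nonneg: "\<And>x y. \<lbrakk>x \<in> S; y \<in> S\<rbrakk> \<Longrightarrow> \<rho> x y \<ge> 0"
    and zero_diag: "\<And>x. x \<in> S \<Longrightarrow> \<rho> x x = 0"
begin

lemma chain_length_bound:
  "(\<And>k. k \<le> n \<Longrightarrow> z k \<in> S) \<Longrightarrow> \<rho> (z 0) (z n) \<le> 2 * (\<Sum>k<n. \<rho> (z k) (z (Suc k)))"
proof (induction n arbitrary: z rule: less_induct)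
  case (less n)
  define f where "f i = \<rho> (z i) (z (Suc i))" for i
  show ?case
  proof (cases "n = 0")
    case True
    then show ?thesis using less.prems zero_diag by simp
  next
    case False
    \<comment> \<open>Cut the chain at the link where the partial sums pass half the total; the four-point
      inequality combines the two halves and that link.\<close>
    obtain k where "k < n" and head: "2 * (\<Sum>i<k. f i) \<le> (\<Sum>i<n. f i)"
      and tail: "2 * (\<Sum>i\<in>{Suc k..<n}. f i) \<le> (\<Sum>i<n. f i)"
      using sum_split_at_half[of n f] False less.prems nonneg unfolding f_def by auto
    have "\<rho> (z 0) (z k) \<le> 2 * (\<Sum>i<k. f i)"
      using less.IH[OF \<open>k < n\<close>, of z] less.prems \<open>k < n\<close> unfolding f_def by simp
    moreover have "\<rho> (z (Suc k)) (z n) \<le> 2 * (\<Sum>i\<in>{Suc k..<n}. f i)"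
    proof -
      have "\<rho> (z (Suc k + 0)) (z (Suc k + (n - Suc k))) \<le>
          2 * (\<Sum>i<n - Suc k. \<rho> (z (Suc k + i)) (z (Suc (Suc k + i))))"
        using less.IH[of "n - Suc k" "\<lambda>i. z (Suc k + i)"] \<open>k < n\<close> less.prems by simp
      also have "(\<Sum>i<n - Suc k. \<rho> (z (Suc k + i)) (z (Suc (Suc k + i)))) = (\<Sum>i\<in>{Suc k..<n}. f i)"
        unfolding f_def sum.atLeastLessThan_shift_0[of _ "Suc k"] lessThan_atLeast0 by simp
      finally show ?thesis using \<open>k < n\<close> by simp
    qed
    moreover have "f k \<le> (\<Sum>i<n. f i)"
      using \<open>k < n\<close> less.prems nonneg unfolding f_def by (intro member_le_sum) auto
    moreover have "\<rho> (z 0) (z n) \<le> 2 * max (\<rho> (z 0) (z k)) (max (f k) (\<rho> (z (Suc k)) (z n)))"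
      unfolding f_def using four_point less.prems \<open>k < n\<close> by simp
    ultimately show ?thesis using head tail unfolding f_def by auto
  qed
qed

lemma chain_lengths_lower_bound: "s \<in> chain_lengths S \<rho> x y \<Longrightarrow> \<rho> x y \<le> 2 * s"
  unfolding chain_lengths_def using chain_length_bound by blast

lemma chain_metric_le:
  assumes "x \<in> S" "y \<in> S" "s \<in> chain_lengths S \<rho> x y"
  shows "chain_metric S \<rho> x y \<le> s"
proof -
  have "bdd_below (chain_lengths S \<rho> x y)"
    using chain_lengths_lower_bound nonneg[OF assms(1,2)]
    by (intro bdd_belowI[of _ 0]) fastforce
  then show ?thesis unfolding chain_metric_def using assms by (simp add: cInf_lower)
qed

lemma chain_metric_greatest:
  assumes "x \<in> S" "y \<in> S" "\<And>s. s \<in> chain_lengths S \<rho> x y \<Longrightarrow> t \<le> s"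
  shows "t \<le> chain_metric S \<rho> x y"
  unfolding chain_metric_def using assms chain_lengths_single[OF assms(1,2)]
  by (auto intro: cInf_greatest)

lemma chain_metric_bounds:
  assumes "x \<in> S" "y \<in> S"
  shows "\<rho> x y / 2 \<le> chain_metric S \<rho> x y" "chain_metric S \<rho> x y \<le> \<rho> x y"
proof -
  show "\<rho> x y / 2 \<le> chain_metric S \<rho> x y"
    using chain_lengths_lower_bound by (intro chain_metric_greatest[OF assms]) force
  show "chain_metric S \<rho> x y \<le> \<rho> x y"
    by (rule chain_metric_le[OF assms chain_lengths_single[OF assms]])
qed

lemma Metric_space_chain_metric:
  assumes symm: "\<And>x y. \<lbrakk>x \<in> S; y \<in> S\<rbrakk> \<Longrightarrow> \<rho> x y = \<rho> y x"
    and pos: "\<And>x y. \<lbrakk>x \<in> S; y \<in> S; x \<noteq> y\<rbrakk> \<Longrightarrow> \<rho> x y > 0"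
  shows "Metric_space S (chain_metric S \<rho>)"
proof
  fix x y
  show "0 \<le> chain_metric S \<rho> x y"
    using chain_metric_bounds(1)[of x y] nonneg[of x y] by (force simp: chain_metric_def)
  have "chain_lengths S \<rho> x y = chain_lengths S \<rho> y x"
    using chain_lengths_reverse[of S \<rho>] symm by blast
  then show "chain_metric S \<rho> x y = chain_metric S \<rho> y x"
    unfolding chain_metric_def by auto
next
  fix x y assume "x \<in> S" "y \<in> S"
  then show "chain_metric S \<rho> x y = 0 \<longleftrightarrow> x = y"
    using chain_metric_bounds[of x y] pos[of x y] zero_diag[of x] nonneg[of x y] by force
next
  fix x y z assume xyz: "x \<in> S" "y \<in> S" "z \<in> S"
  have "chain_metric S \<rho> x z - s \<le> chain_metric S \<rho> y z" if "s \<in> chain_lengths S \<rho> x y" for s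
    using chain_metric_le[OF xyz(1,3) chain_lengths_append[OF that]]
    by (intro chain_metric_greatest[OF xyz(2,3)]) (simp add: algebra_simps)
  then have "chain_metric S \<rho> x z - chain_metric S \<rho> y z \<le> chain_metric S \<rho> x y"
    by (intro chain_metric_greatest[OF xyz(1,2)]) (simp add: algebra_simps)
  then show "chain_metric S \<rho> x z \<le> chain_metric S \<rho> x y + chain_metric S \<rho> y z" by simp
qed

end

section \<open>Metrics defined by log-scales\<close>

lemma mtopology_eq_imp_locally_finer:
  assumes "Metric_space M d1" "Metric_space M d2"
    and "Metric_space.mtopology M d1 = Metric_space.mtopology M d2" "x \<in> M" "\<epsilon> > 0"
  shows "\<exists>\<delta>>0. \<forall>y\<in>M. d1 x y < \<delta> \<longrightarrow> d2 x y < \<epsilon>"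
proof -
  have "continuous_map (Metric_space.mtopology M d1) (Metric_space.mtopology M d2) id"
    using assms(3) by simp
  then have "\<forall>\<epsilon>>0. \<exists>\<delta>>0. \<forall>y. y \<in> M \<and> d1 x y < \<delta> \<longrightarrow> d2 x y < \<epsilon>"
    using assms(4) unfolding Metric_space.metric_continuous_map[OF assms(1,2)] by simp
  then show ?thesis using assms(5) by blast
qed

lemma mtopology_eq_imp_uniformly_finer:
  assumes "Metric_space M d1" "Metric_space M d2"
    and "Metric_space.mtopology M d1 = Metric_space.mtopology M d2"
    and "compact_space (Metric_space.mtopology M d1)" "\<epsilon> > 0"
  shows "\<exists>\<delta>>0. \<forall>x\<in>M. \<forall>y\<in>M. d1 x y < \<delta> \<longrightarrow> d2 x y < \<epsilon>"
proof -
  have "uniformly_continuous_map (metric (M, d1)) (metric (M, d2)) id"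
    using assms(3,4) by (intro continuous_imp_uniformly_continuous_map)
      (simp add: Metric_space.mtopology_of[OF assms(1)] Metric_space.mtopology_of[OF assms(2)])
  then show ?thesis
    using assms(5) unfolding uniformly_continuous_map_def Metric_space.mspace_metric[OF assms(1)]
      Metric_space.mdist_metric[OF assms(1)] Metric_space.mdist_metric[OF assms(2)]
    by (metis Metric_space.commute[OF assms(1)] Metric_space.commute[OF assms(2)] id_apply)
qed

lemma mtopology_eq_if_locally_finer:
  assumes "Metric_space M d1" "Metric_space M d2"
    and "\<And>x \<epsilon>. \<lbrakk>x \<in> M; \<epsilon> > 0\<rbrakk> \<Longrightarrow> \<exists>\<delta>>0. \<forall>y\<in>M. d1 x y < \<delta> \<longrightarrow> d2 x y < \<epsilon>"
    and "\<And>x \<epsilon>. \<lbrakk>x \<in> M; \<epsilon> > 0\<rbrakk> \<Longrightarrow> \<exists>\<delta>>0. \<forall>y\<in>M. d2 x y < \<delta> \<longrightarrow> d1 x y < \<epsilon>"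
  shows "Metric_space.mtopology M d1 = Metric_space.mtopology M d2"
proof -
  have "continuous_map (Metric_space.mtopology M d1) (Metric_space.mtopology M d2) id"
    unfolding Metric_space.metric_continuous_map[OF assms(1,2)] using assms(3) by fastforce
  moreover have "continuous_map (Metric_space.mtopology M d2) (Metric_space.mtopology M d1) id"
    unfolding Metric_space.metric_continuous_map[OF assms(2,1)] using assms(4) by fastforce
  ultimately have "homeomorphic_map (Metric_space.mtopology M d2) (Metric_space.mtopology M d1) id"
    by (auto simp: homeomorphic_map_maps homeomorphic_maps_def)
  then show ?thesis by simp
qed

lemma subtopology_mtopology:
  assumes "Metric_space S m" "A \<subseteq> S"
  shows "subtopology (Metric_space.mtopology S m) A = Metric_space.mtopology A m"
proof -
  interpret Submetric S m A
    using assms by (simp add: Submetric_def Submetric_axioms_def)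
  show ?thesis by (rule mtopology_submetric[symmetric])
qed

lemma epow_nonneg: "epow \<alpha> e \<ge> 0"
  unfolding epow_def by (cases e) auto

lemma epow_ereal [simp]: "epow \<alpha> (ereal r) = \<alpha> powr r"
  and epow_infinity [simp]: "epow \<alpha> \<infinity> = 0"
  unfolding epow_def by simp_all

lemma epow_antimono:
  assumes "0 < \<alpha>" "\<alpha> < 1" "a \<noteq> -\<infinity>" "a \<le> b"
  shows "epow \<alpha> b \<le> epow \<alpha> a"
  using assms by (cases a; cases b) (auto intro: powr_mono' simp: epow_def)

lemma epow_min:
  assumes "0 < \<alpha>" "\<alpha> < 1" "a \<noteq> -\<infinity>" "b \<noteq> -\<infinity>"
  shows "epow \<alpha> (min a b) = max (epow \<alpha> a) (epow \<alpha> b)"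
  using epow_antimono[OF assms(1,2,3), of b] epow_antimono[OF assms(1,2,4), of a]
  by (cases "a \<le> b") (auto simp: min_def max_def)

lemma epow_minus:
  assumes "a \<noteq> -\<infinity>" "0 < \<alpha>"
  shows "epow \<alpha> (a - ereal t) = \<alpha> powr (-t) * epow \<alpha> a"
  using assms by (cases a) (auto simp: powr_add[symmetric])

lemma epow_less_powr_iff:
  assumes "0 < \<alpha>" "\<alpha> < 1" "a \<noteq> -\<infinity>"
  shows "epow \<alpha> a < \<alpha> powr M \<longleftrightarrow> ereal M < a"
proof (cases a)
  case (real r)
  have "\<alpha> powr r < \<alpha> powr M \<longleftrightarrow> M < r"
    using assms(1,2) powr_less_mono'[of \<alpha> M r] powr_mono'[of r M \<alpha>] by (auto simp: not_less[symmetric])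
  then show ?thesis using real by simp
qed (use assms in auto)

lemma ereal_min_diff_trans:
  fixes a b c d e :: ereal
  assumes "min a b - ereal \<delta> \<le> d" "min d c - ereal \<delta> \<le> e" "\<delta> \<ge> 0"
  shows "min a (min b c) - ereal (2 * \<delta>) \<le> e"
proof -
  define m where "m = min a (min b c)"
  have "m \<le> min a b" unfolding m_def by (simp add: min.coboundedI2)
  then have "m - ereal \<delta> \<le> d"
    using ereal_minus_mono[of m "min a b" "ereal \<delta>" "ereal \<delta>"] assms(1) by simp
  moreover have "m \<le> c" unfolding m_def by (simp add: min.coboundedI2)
  then have "m - ereal \<delta> \<le> c"
    using ereal_diff_le_mono_left[of m c "ereal \<delta>"] assms(3) by simp
  ultimately have "m - ereal \<delta> - ereal \<delta> \<le> min d c - ereal \<delta>"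
    by (intro ereal_minus_mono) auto
  also have "m - ereal \<delta> - ereal \<delta> = m - ereal (2 * \<delta>)"
    using ereal_diff_add_eq_diff_diff_swap[of "ereal \<delta>" m "ereal \<delta>"] by simp
  finally show ?thesis using assms(2) unfolding m_def by simp
qed

lemma log_scale_onD:
  assumes "log_scale_on S l" "x \<in> S" "y \<in> S"
  shows "l x y = l y x" "l x y \<noteq> -\<infinity>" "l x y = \<infinity> \<longleftrightarrow> x = y"
proof -
  have "\<forall>x\<in>S. \<forall>y\<in>S. l x y = l y x \<and> l x y \<noteq> -\<infinity> \<and> (l x y = \<infinity> \<longleftrightarrow> x = y)"
    using assms(1) unfolding log_scale_on_def by (rule conjunct1)
  then have c: "l x y = l y x \<and> l x y \<noteq> -\<infinity> \<and> (l x y = \<infinity> \<longleftrightarrow> x = y)"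
    using assms(2,3) by blast
  show "l x y = l y x" by (rule conjunct1[OF c])
  show "l x y \<noteq> -\<infinity>" by (rule conjunct1[OF conjunct2[OF c]])
  show "l x y = \<infinity> \<longleftrightarrow> x = y" by (rule conjunct2[OF conjunct2[OF c]])
qed

lemma log_scale_onE:
  assumes "log_scale_on S l"
  obtains \<delta> where "\<delta> \<ge> 0"
    "\<And>x y z. \<lbrakk>x \<in> S; y \<in> S; z \<in> S\<rbrakk> \<Longrightarrow> min (l x y) (l y z) - ereal \<delta> \<le> l x z"
proof -
  have "\<exists>\<delta>::real. \<delta> \<ge> 0 \<and> (\<forall>x\<in>S. \<forall>y\<in>S. \<forall>z\<in>S. l x z \<ge> min (l x y) (l y z) - ereal \<delta>)"
    using assms unfolding log_scale_on_def by (rule conjunct2)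
  then show thesis using that by blast
qed

lemma epow_log_scale_four_point:
  assumes ls: "log_scale_on S l" and "\<delta> \<ge> 0"
    and tri: "\<And>x y z. \<lbrakk>x \<in> S; y \<in> S; z \<in> S\<rbrakk> \<Longrightarrow> min (l x y) (l y z) - ereal \<delta> \<le> l x z"
    and \<alpha>: "0 < \<alpha>" "\<alpha> < 1" "\<alpha> powr (-(2 * \<delta>)) \<le> 2"
    and S: "x \<in> S" "y \<in> S" "z \<in> S" "w \<in> S"
  shows "epow \<alpha> (l x w) \<le> 2 * max (epow \<alpha> (l x y)) (max (epow \<alpha> (l y z)) (epow \<alpha> (l z w)))"
proof -
  define m where "m = min (l x y) (min (l y z) (l z w))"
  have finite: "l x y \<noteq> -\<infinity>" "l y z \<noteq> -\<infinity>" "l z w \<noteq> -\<infinity>"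
    using log_scale_onD(2)[OF ls] S by auto
  then have "m \<noteq> -\<infinity>" unfolding m_def by (simp add: min_def)
  have "m - ereal (2 * \<delta>) \<le> l x w"
    unfolding m_def using tri[of x y z] tri[of x z w] S \<open>\<delta> \<ge> 0\<close> by (intro ereal_min_diff_trans) auto
  moreover have "m - ereal (2 * \<delta>) \<noteq> -\<infinity>"
    using \<open>m \<noteq> -\<infinity>\<close> by (cases m) auto
  ultimately have "epow \<alpha> (l x w) \<le> epow \<alpha> (m - ereal (2 * \<delta>))"
    using epow_antimono[OF \<alpha>(1,2)] by blast
  also have "\<dots> = \<alpha> powr (-(2 * \<delta>)) * epow \<alpha> m"
    by (rule epow_minus[OF \<open>m \<noteq> -\<infinity>\<close> \<alpha>(1)])
  also have "\<dots> \<le> 2 * epow \<alpha> m"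
    by (rule mult_right_mono[OF \<alpha>(3) epow_nonneg])
  also have "min (l y z) (l z w) \<noteq> -\<infinity>" using finite by (simp add: min_def)
  then have "epow \<alpha> m = max (epow \<alpha> (l x y)) (max (epow \<alpha> (l y z)) (epow \<alpha> (l z w)))"
    unfolding m_def by (simp add: epow_min[OF \<alpha>(1,2)] finite)
  finally show ?thesis .
qed

lemma log_scale_comparable_metric:
  assumes ls: "log_scale_on S l"
  obtains \<alpha> D where "0 < \<alpha>" "\<alpha> < 1" "Metric_space S D"
    "\<And>x y. \<lbrakk>x \<in> S; y \<in> S\<rbrakk> \<Longrightarrow> epow \<alpha> (l x y) / 2 \<le> D x y \<and> D x y \<le> epow \<alpha> (l x y)"
proof -
  obtain \<delta> where "\<delta> \<ge> 0"
    and tri: "\<And>x y z. \<lbrakk>x \<in> S; y \<in> S; z \<in> S\<rbrakk> \<Longrightarrow> min (l x y) (l y z) - ereal \<delta> \<le> l x z"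
    using log_scale_onE[OF ls] by blast
  \<comment> \<open>Chosen so that \<alpha> powr (-2\<delta>) \<le> 2, which turns the two-step triangle inequality of l
    into the four-point inequality of \<alpha>^l.\<close>
  define \<alpha> where "\<alpha> = (1/2::real) powr (1 / (2 * \<delta> + 2))"
  have "0 < \<alpha>" unfolding \<alpha>_def by simp
  have "\<alpha> < 1"
    using powr_less_mono2[of "1 / (2 * \<delta> + 2)" "1/2" 1] \<open>\<delta> \<ge> 0\<close> unfolding \<alpha>_def by simp
  have "\<alpha> powr (-(2 * \<delta>)) = 2 powr (2 * \<delta> / (2 * \<delta> + 2))"
    unfolding \<alpha>_def powr_powr by (simp add: powr_minus_divide powr_divide divide_simps)
  also have "\<dots> \<le> 2 powr 1" using \<open>\<delta> \<ge> 0\<close> by (intro powr_mono) auto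
  finally have "\<alpha> powr (-(2 * \<delta>)) \<le> 2" by simp
  define \<rho> where "\<rho> x y = epow \<alpha> (l x y)" for x y
  have four: "\<rho> x w \<le> 2 * max (\<rho> x y) (max (\<rho> y z) (\<rho> z w))"
    if "x \<in> S" "y \<in> S" "z \<in> S" "w \<in> S" for x y z w
    unfolding \<rho>_def by (rule epow_log_scale_four_point[OF ls \<open>\<delta> \<ge> 0\<close> tri \<open>0 < \<alpha>\<close> \<open>\<alpha> < 1\<close>
      \<open>\<alpha> powr (-(2 * \<delta>)) \<le> 2\<close> that])
  have nonneg: "\<rho> x y \<ge> 0" if "x \<in> S" "y \<in> S" for x y
    unfolding \<rho>_def by (rule epow_nonneg)
  have zero: "\<rho> x x = 0" if "x \<in> S" for x
    using log_scale_onD(3)[OF ls that that] by (simp add: \<rho>_def)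
  have symm: "\<rho> x y = \<rho> y x" if "x \<in> S" "y \<in> S" for x y
    using log_scale_onD(1)[OF ls that] by (simp add: \<rho>_def)
  have pos: "\<rho> x y > 0" if "x \<in> S" "y \<in> S" "x \<noteq> y" for x y
    using log_scale_onD(2,3)[OF ls that(1,2)] that(3) \<open>0 < \<alpha>\<close> unfolding \<rho>_def by (cases "l x y") auto
  show thesis
  proof (rule that[OF \<open>0 < \<alpha>\<close> \<open>\<alpha> < 1\<close> Metric_space_chain_metric[of S \<rho>, OF four nonneg zero symm pos]])
    fix x y assume "x \<in> S" "y \<in> S"
    then show "epow \<alpha> (l x y) / 2 \<le> chain_metric S \<rho> x y \<and> chain_metric S \<rho> x y \<le> epow \<alpha> (l x y)"
      using chain_metric_bounds[of S \<rho>, OF four nonneg zero \<open>x \<in> S\<close> \<open>y \<in> S\<close>] unfolding \<rho>_def by simp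
  qed
qed

lemma top_log_scale_mtopology:
  assumes ms: "Metric_space S m" and ls: "log_scale_on S l"
    and close: "\<And>\<epsilon>. \<epsilon> > 0 \<Longrightarrow> \<exists>M. \<forall>x\<in>S. \<forall>y\<in>S. l x y > ereal M \<longrightarrow> m x y < \<epsilon>"
    and large: "\<And>x M. x \<in> S \<Longrightarrow> \<exists>r>0. \<forall>y\<in>S. m x y < r \<longrightarrow> l x y > ereal M"
  shows "top_log_scale (Metric_space.mtopology S m) l"
proof -
  obtain \<alpha> D where \<alpha>: "0 < \<alpha>" "\<alpha> < 1" and msD: "Metric_space S D"
    and D: "\<And>x y. \<lbrakk>x \<in> S; y \<in> S\<rbrakk> \<Longrightarrow> epow \<alpha> (l x y) / 2 \<le> D x y \<and> D x y \<le> epow \<alpha> (l x y)"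
    using log_scale_comparable_metric[OF ls] by blast
  note less_iff = epow_less_powr_iff[OF \<alpha> log_scale_onD(2)[OF ls]]
  have "Metric_space.mtopology S D = Metric_space.mtopology S m"
  proof (rule mtopology_eq_if_locally_finer[OF msD ms])
    fix x \<epsilon> assume "x \<in> S" "(\<epsilon>::real) > 0"
    obtain M where M: "\<forall>x\<in>S. \<forall>y\<in>S. l x y > ereal M \<longrightarrow> m x y < \<epsilon>"
      using close[OF \<open>\<epsilon> > 0\<close>] by blast
    have "m x y < \<epsilon>" if "y \<in> S" "D x y < \<alpha> powr M / 2" for y
    proof -
      have "epow \<alpha> (l x y) < \<alpha> powr M" using D[OF \<open>x \<in> S\<close> that(1)] that(2) by linarith
      then show ?thesis using M less_iff[OF \<open>x \<in> S\<close> that(1)] \<open>x \<in> S\<close> that(1) by blast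
    qed
    then show "\<exists>\<delta>>0. \<forall>y\<in>S. D x y < \<delta> \<longrightarrow> m x y < \<epsilon>"
      using \<alpha> by (intro exI[of _ "\<alpha> powr M / 2"]) auto
  next
    fix x \<epsilon> assume "x \<in> S" "(\<epsilon>::real) > 0"
    define M where "M = log \<alpha> (\<epsilon> / 2)"
    have "\<alpha> powr M = \<epsilon> / 2" unfolding M_def using \<alpha> \<open>\<epsilon> > 0\<close> by simp
    obtain r where "r > 0" "\<forall>y\<in>S. m x y < r \<longrightarrow> l x y > ereal M"
      using large[OF \<open>x \<in> S\<close>] by blast
    moreover have "D x y < \<epsilon>" if "y \<in> S" "l x y > ereal M" for y
    proof -
      have "epow \<alpha> (l x y) < \<alpha> powr M"
        using less_iff[OF \<open>x \<in> S\<close> that(1)] that(2) by blast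
      then have "epow \<alpha> (l x y) < \<epsilon> / 2" using \<open>\<alpha> powr M = \<epsilon> / 2\<close> by simp
      then show ?thesis using D[OF \<open>x \<in> S\<close> that(1)] \<open>\<epsilon> > 0\<close> by linarith
    qed
    ultimately show "\<exists>\<delta>>0. \<forall>y\<in>S. m x y < \<delta> \<longrightarrow> D x y < \<epsilon>" by blast
  qed
  then show ?thesis
    unfolding top_log_scale_def Metric_space.topspace_mtopology[OF ms]
    using ls msD \<alpha> D by (intro conjI exI[of _ D] exI[of _ \<alpha>] exI[of _ 2]) force+
qed

lemma top_log_scale_subspaceE:
  assumes ms: "Metric_space S m" and "A \<subseteq> S"
    and "top_log_scale (subtopology (Metric_space.mtopology S m) A) L"
  obtains d \<alpha> c where "log_scale_on A L" "Metric_space A d"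
    "Metric_space.mtopology A d = Metric_space.mtopology A m" "0 < \<alpha>" "\<alpha> < 1" "c > 1"
    "\<And>x y. \<lbrakk>x \<in> A; y \<in> A\<rbrakk> \<Longrightarrow> epow \<alpha> (L x y) / c \<le> d x y \<and> d x y \<le> c * epow \<alpha> (L x y)"
  using assms(3) \<open>A \<subseteq> S\<close>
  unfolding subtopology_mtopology[OF assms(1,2)] top_log_scale_def
    Metric_space.topspace_mtopology[OF Metric_space.subspace[OF ms \<open>A \<subseteq> S\<close>]]
  by blast

lemma top_log_scale_uniformly_close_if_large:
  assumes ms: "Metric_space S m" and "A \<subseteq> S"
    and L: "top_log_scale (subtopology (Metric_space.mtopology S m) A) L"
    and "compactin (Metric_space.mtopology S m) A" "\<epsilon> > 0"
  shows "\<forall>\<^sub>F M in at_top. \<forall>x\<in>A. \<forall>y\<in>A. L x y > ereal M \<longrightarrow> m x y < \<epsilon>"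
proof -
  obtain d \<alpha> c where "Metric_space A d" and top: "Metric_space.mtopology A d = Metric_space.mtopology A m"
    and \<alpha>: "0 < \<alpha>" "\<alpha> < 1" and "c > 1"
    and d: "\<And>x y. \<lbrakk>x \<in> A; y \<in> A\<rbrakk> \<Longrightarrow> d x y \<le> c * epow \<alpha> (L x y)"
    using top_log_scale_subspaceE[OF ms \<open>A \<subseteq> S\<close> L] by metis
  have "compact_space (Metric_space.mtopology A d)"
    using compact_space_subtopology[OF \<open>compactin _ A\<close>]
    unfolding top subtopology_mtopology[OF ms \<open>A \<subseteq> S\<close>] .
  then obtain \<eta> where "\<eta> > 0" and \<eta>: "\<forall>x\<in>A. \<forall>y\<in>A. d x y < \<eta> \<longrightarrow> m x y < \<epsilon>"
    using mtopology_eq_imp_uniformly_finer[OF \<open>Metric_space A d\<close>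
        Metric_space.subspace[OF ms \<open>A \<subseteq> S\<close>] top] \<open>\<epsilon> > 0\<close> by blast
  define M where "M = log \<alpha> (\<eta> / (2 * c))"
  have "\<alpha> powr M = \<eta> / (2 * c)" unfolding M_def using \<alpha> \<open>\<eta> > 0\<close> \<open>c > 1\<close> by simp
  have "d x y < \<eta>" if "x \<in> A" "y \<in> A" "L x y > ereal N" "N \<ge> M" for x y N
  proof -
    have "ereal M \<le> L x y" using that(3,4) by (meson ereal_less_eq(3) order.trans less_imp_le)
    then have "epow \<alpha> (L x y) \<le> \<alpha> powr M"
      using epow_antimono[OF \<alpha>, of "ereal M" "L x y"] by simp
    then have "c * epow \<alpha> (L x y) \<le> \<eta> / 2"
      using \<open>\<alpha> powr M = \<eta> / (2 * c)\<close> \<open>c > 1\<close> by (simp add: field_simps)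
    then show ?thesis using d[OF that(1,2)] \<open>\<eta> > 0\<close> by linarith
  qed
  then show ?thesis using \<eta> by (intro eventually_at_top_linorderI[of M]) blast
qed

lemma top_log_scale_large_if_close:
  assumes ms: "Metric_space S m" and "A \<subseteq> S"
    and L: "top_log_scale (subtopology (Metric_space.mtopology S m) A) L" and "x \<in> A"
  shows "\<exists>r>0. \<forall>y\<in>A. m x y < r \<longrightarrow> L x y > ereal M"
proof -
  obtain d \<alpha> c where ls: "log_scale_on A L" and "Metric_space A d"
    and top: "Metric_space.mtopology A d = Metric_space.mtopology A m"
    and \<alpha>: "0 < \<alpha>" "\<alpha> < 1" and "c > 1"
    and d: "\<And>x y. \<lbrakk>x \<in> A; y \<in> A\<rbrakk> \<Longrightarrow> epow \<alpha> (L x y) / c \<le> d x y"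
    using top_log_scale_subspaceE[OF ms \<open>A \<subseteq> S\<close> L] by metis
  obtain r where "r > 0" and r: "\<forall>y\<in>A. m x y < r \<longrightarrow> d x y < \<alpha> powr M / c"
    using mtopology_eq_imp_locally_finer[OF Metric_space.subspace[OF ms \<open>A \<subseteq> S\<close>]
        \<open>Metric_space A d\<close> top[symmetric] \<open>x \<in> A\<close>, of "\<alpha> powr M / c"] \<alpha> \<open>c > 1\<close> by auto
  have "L x y > ereal M" if "y \<in> A" "m x y < r" for y
  proof -
    have "epow \<alpha> (L x y) / c < \<alpha> powr M / c" using d[OF \<open>x \<in> A\<close> that(1)] r that by fastforce
    then have "epow \<alpha> (L x y) < \<alpha> powr M" using \<open>c > 1\<close> by (simp add: divide_strict_right_mono_neg field_simps)
    then show ?thesis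
      using epow_less_powr_iff[OF \<alpha> log_scale_onD(2)[OF ls \<open>x \<in> A\<close> that(1)]] by simp
  qed
  then show ?thesis using \<open>r > 0\<close> by blast
qed

lemma log_scale_on_eventually:
  assumes "log_scale_on S l"
  shows "\<forall>\<^sub>F \<delta> in at_top. \<forall>x\<in>S. \<forall>y\<in>S. \<forall>z\<in>S. min (l x y) (l y z) - ereal \<delta> \<le> l x z"
proof -
  obtain \<delta> where "\<delta> \<ge> 0"
    and tri: "\<And>x y z. \<lbrakk>x \<in> S; y \<in> S; z \<in> S\<rbrakk> \<Longrightarrow> min (l x y) (l y z) - ereal \<delta> \<le> l x z"
    using log_scale_onE[OF assms] by metis
  show ?thesis
  proof (rule eventually_at_top_linorderI[of \<delta>], intro ballI)
    fix \<delta>' x y z assume "\<delta> \<le> \<delta>'" "x \<in> S" "y \<in> S" "z \<in> S"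
    then have "min (l x y) (l y z) - ereal \<delta>' \<le> min (l x y) (l y z) - ereal \<delta>"
      by (intro ereal_minus_mono) auto
    then show "min (l x y) (l y z) - ereal \<delta>' \<le> l x z"
      using tri[OF \<open>x \<in> S\<close> \<open>y \<in> S\<close> \<open>z \<in> S\<close>] by (rule order_trans)
  qed
qed

lemma lipschitz_equiv_on_eventually:
  assumes "lipschitz_equiv_on S l l'"
  shows "\<forall>\<^sub>F C in at_top. \<forall>x\<in>S. \<forall>y\<in>S. l x y \<le> l' x y + ereal C \<and> l' x y \<le> l x y + ereal C"
proof -
  obtain C where C: "\<forall>x\<in>S. \<forall>y\<in>S. l x y \<le> l' x y + ereal C \<and> l' x y \<le> l x y + ereal C"
    using assms unfolding lipschitz_equiv_on_def by (elim exE)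
  show ?thesis
  proof (rule eventually_at_top_linorderI[of C], intro ballI)
    fix C' x y assume "C \<le> C'" "x \<in> S" "y \<in> S"
    then have "a + ereal C \<le> a + ereal C'" for a :: ereal by (intro add_left_mono) simp
    then show "l x y \<le> l' x y + ereal C' \<and> l' x y \<le> l x y + ereal C'"
      using C \<open>x \<in> S\<close> \<open>y \<in> S\<close> by (meson order_trans)
  qed
qed

section \<open>Gluing log-scales along a finite closed cover\<close>

lemma ereal_min_diff_transfer:
  fixes a b c p q r :: ereal
  assumes "min p q - ereal D \<le> r" "a \<le> p + ereal D" "b \<le> q + ereal D" "r \<le> c + ereal D"
  shows "min a b - ereal (3 * D) \<le> c"
proof -
  have "min a b - ereal D \<le> a - ereal D" "min a b - ereal D \<le> b - ereal D"
    by (intro ereal_minus_mono; simp)+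
  moreover have "a - ereal D \<le> p" "b - ereal D \<le> q"
    using assms(2,3) by (simp_all add: ereal_minus_le)
  ultimately have "min a b - ereal D \<le> min p q" by (meson min.boundedI order_trans)
  then have "min a b - ereal D - ereal D \<le> r"
    using ereal_minus_mono[of _ "min p q" "ereal D" "ereal D"] assms(1) by (meson order_refl order_trans)
  then have "min a b - ereal D - ereal D - ereal D \<le> r - ereal D"
    by (intro ereal_minus_mono) simp_all
  also have "r - ereal D \<le> c" using assms(4) by (simp add: ereal_minus_le)
  finally have "min a b - ereal D - ereal D - ereal D \<le> c" .
  moreover have "min a b - ereal D - ereal D - ereal D = min a b - ereal (3 * D)"
    by (cases "min a b") simp_all
  ultimately show ?thesis by simp
qed

locale log_scale_atlas = Metric_space M d
  for M :: "'a set" and d :: "'a \<Rightarrow> 'a \<Rightarrow> real" +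
  fixes F :: "'i set" and U A :: "'i \<Rightarrow> 'a set" and L :: "'i \<Rightarrow> 'a \<Rightarrow> 'a \<Rightarrow> ereal"
  assumes compact: "compact_space mtopology"
    and finite_charts: "finite F"
    and openin_chart: "k \<in> F \<Longrightarrow> openin mtopology (U k)"
    and chart_subset: "k \<in> F \<Longrightarrow> U k \<subseteq> A k"
    and closedin_chart: "k \<in> F \<Longrightarrow> closedin mtopology (A k)"
    and cover: "M \<subseteq> (\<Union>k\<in>F. U k)"
    and chart_top_log_scale: "k \<in> F \<Longrightarrow> top_log_scale (subtopology mtopology (A k)) (L k)"
    and chart_nonneg: "\<lbrakk>k \<in> F; x \<in> A k; y \<in> A k\<rbrakk> \<Longrightarrow> L k x y \<ge> 0"
    and chart_lipschitz: "\<lbrakk>k \<in> F; k' \<in> F\<rbrakk> \<Longrightarrow> lipschitz_equiv_on (A k \<inter> A k') (L k) (L k')"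
begin

lemma chart_subset_space: "k \<in> F \<Longrightarrow> A k \<subseteq> M"
  using closedin_subset[OF closedin_chart] by simp

lemma chart_log_scale_on: "k \<in> F \<Longrightarrow> log_scale_on (A k) (L k)"
  using chart_top_log_scale[of k] chart_subset_space[of k]
  unfolding top_log_scale_def by (simp add: Int_absorb1)

lemma lebesgue_number_charts:
  obtains r where "r > 0" "\<And>x. x \<in> M \<Longrightarrow> \<exists>k\<in>F. \<forall>y\<in>M. d x y < r \<longrightarrow> y \<in> U k"
proof -
  have "compactin mtopology M"
    using compact unfolding compact_space_def by simp
  then obtain r where "r > 0" and r: "\<forall>x\<in>M. \<exists>V\<in>U ` F. mball x r \<subseteq> V"
    using lebesgue_number[of M "U ` F"] cover openin_chart by auto
  show thesis
  proof (rule that[OF \<open>r > 0\<close>])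
    fix x assume "x \<in> M"
    then obtain k where "k \<in> F" "mball x r \<subseteq> U k" using r by blast
    then show "\<exists>k\<in>F. \<forall>y\<in>M. d x y < r \<longrightarrow> y \<in> U k" using \<open>x \<in> M\<close> by (force simp: subset_iff)
  qed
qed

text \<open>Which common chart is chosen does not matter, as charts are Lipschitz equivalent on
  overlaps; points without a common chart are far apart, so the value 0 there is harmless.\<close>

definition glued :: "'a \<Rightarrow> 'a \<Rightarrow> ereal" where
  "glued x y = (if \<exists>k\<in>F. x \<in> A k \<and> y \<in> A k then L (SOME k. k \<in> F \<and> x \<in> A k \<and> y \<in> A k) x y else 0)"

lemma glued_chart:
  assumes "\<exists>k\<in>F. x \<in> A k \<and> y \<in> A k"
  obtains k where "k \<in> F" "x \<in> A k" "y \<in> A k" "glued x y = L k x y"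
proof -
  have "\<exists>k. k \<in> F \<and> x \<in> A k \<and> y \<in> A k" using assms by blast
  then have "(SOME k. k \<in> F \<and> x \<in> A k \<and> y \<in> A k) \<in> F \<and> x \<in> A (SOME k. k \<in> F \<and> x \<in> A k \<and> y \<in> A k)
      \<and> y \<in> A (SOME k. k \<in> F \<and> x \<in> A k \<and> y \<in> A k)"
    by (rule someI_ex)
  then show thesis using that assms unfolding glued_def by auto
qed

lemma glued_no_chart: "\<not> (\<exists>k\<in>F. x \<in> A k \<and> y \<in> A k) \<Longrightarrow> glued x y = 0"
  unfolding glued_def by auto

lemma glued_nonneg: "glued x y \<ge> 0"
proof (cases "\<exists>k\<in>F. x \<in> A k \<and> y \<in> A k")
  case True
  then obtain k where "k \<in> F" "x \<in> A k" "y \<in> A k" "glued x y = L k x y" by (rule glued_chart)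
  then show ?thesis using chart_nonneg by simp
qed (simp add: glued_no_chart)

lemma glued_commute: "glued x y = glued y x"
proof (cases "\<exists>k\<in>F. x \<in> A k \<and> y \<in> A k")
  case True
  define k where "k = (SOME k. k \<in> F \<and> x \<in> A k \<and> y \<in> A k)"
  have "(\<lambda>k. k \<in> F \<and> y \<in> A k \<and> x \<in> A k) = (\<lambda>k. k \<in> F \<and> x \<in> A k \<and> y \<in> A k)" by auto
  then have "glued x y = L k x y" "glued y x = L k y x"
    unfolding glued_def k_def using True by auto
  moreover have "k \<in> F \<and> x \<in> A k \<and> y \<in> A k"
    unfolding k_def using True by (metis (mono_tags, lifting) someI_ex)
  ultimately show ?thesis using log_scale_onD(1)[OF chart_log_scale_on] by metis
next
  case False
  then show ?thesis using glued_no_chart[of x y] glued_no_chart[of y x] by (metis (no_types))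
qed

lemma glued_eq_infinity_iff:
  assumes "x \<in> M"
  shows "glued x y = \<infinity> \<longleftrightarrow> x = y"
proof
  assume "glued x y = \<infinity>"
  then have "\<exists>k\<in>F. x \<in> A k \<and> y \<in> A k" using glued_no_chart by force
  then show "x = y"
    using \<open>glued x y = \<infinity>\<close> log_scale_onD(3)[OF chart_log_scale_on] by (metis glued_chart)
next
  assume "x = y"
  obtain k where "k \<in> F" "x \<in> A k" using cover chart_subset assms by blast
  then show "glued x y = \<infinity>"
    using \<open>x = y\<close> log_scale_onD(3)[OF chart_log_scale_on] by (metis glued_chart)
qed

lemma chart_uniformly_close_if_large:
  "\<epsilon> > 0 \<Longrightarrow> \<forall>\<^sub>F N in at_top. \<forall>k\<in>F. \<forall>x\<in>A k. \<forall>y\<in>A k. L k x y > ereal N \<longrightarrow> d x y < \<epsilon>"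
  using top_log_scale_uniformly_close_if_large[OF Metric_space_axioms chart_subset_space
      chart_top_log_scale closedin_compact_space[OF compact closedin_chart]]
  by (intro eventually_ball_finite finite_charts) blast

lemma glued_uniformly_close_if_large:
  assumes "\<epsilon> > 0"
  shows "\<exists>N. \<forall>x\<in>M. \<forall>y\<in>M. glued x y > ereal N \<longrightarrow> d x y < \<epsilon>"
proof -
  have "\<forall>\<^sub>F N in at_top. N \<ge> 0 \<and> (\<forall>k\<in>F. \<forall>x\<in>A k. \<forall>y\<in>A k. L k x y > ereal N \<longrightarrow> d x y < \<epsilon>)"
    using chart_uniformly_close_if_large[OF assms] by (intro eventually_conj) simp_all
  then obtain N where "N \<ge> 0" and N: "\<forall>k\<in>F. \<forall>x\<in>A k. \<forall>y\<in>A k. L k x y > ereal N \<longrightarrow> d x y < \<epsilon>"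
    unfolding eventually_at_top_linorder by (meson order_refl)
  have "d x y < \<epsilon>" if "glued x y > ereal N" for x y
  proof (cases "\<exists>k\<in>F. x \<in> A k \<and> y \<in> A k")
    case True
    then obtain k where "k \<in> F" "x \<in> A k" "y \<in> A k" "glued x y = L k x y" by (rule glued_chart)
    then show ?thesis using N that by auto
  next
    case False
    then show ?thesis using that \<open>N \<ge> 0\<close> by (simp add: glued_no_chart)
  qed
  then show ?thesis by blast
qed

lemma glued_lipschitz_equiv:
  assumes B: "closedin mtopology B" "top_log_scale (subtopology mtopology B) L'"
    and nonneg: "\<And>x y. \<lbrakk>x \<in> B; y \<in> B\<rbrakk> \<Longrightarrow> L' x y \<ge> 0"
    and lipschitz: "\<And>k. k \<in> F \<Longrightarrow> lipschitz_equiv_on (A k \<inter> B) (L k) L'"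
  shows "lipschitz_equiv_on B glued L'"
proof -
  obtain r where "r > 0" and leb: "\<And>x. x \<in> M \<Longrightarrow> \<exists>k\<in>F. \<forall>y\<in>M. d x y < r \<longrightarrow> y \<in> U k"
    using lebesgue_number_charts by metis
  have "B \<subseteq> M" using closedin_subset[OF B(1)] by simp
  have "\<forall>\<^sub>F C in at_top. \<forall>k\<in>F. \<forall>x\<in>A k \<inter> B. \<forall>y\<in>A k \<inter> B.
      L k x y \<le> L' x y + ereal C \<and> L' x y \<le> L k x y + ereal C"
    using lipschitz_equiv_on_eventually[OF lipschitz] by (intro eventually_ball_finite[OF finite_charts]) blast
  then have "\<forall>\<^sub>F C in at_top. C \<ge> 0 \<and> (\<forall>x\<in>B. \<forall>y\<in>B. L' x y > ereal C \<longrightarrow> d x y < r) \<and>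
      (\<forall>k\<in>F. \<forall>x\<in>A k \<inter> B. \<forall>y\<in>A k \<inter> B. L k x y \<le> L' x y + ereal C \<and> L' x y \<le> L k x y + ereal C)"
    using top_log_scale_uniformly_close_if_large[OF Metric_space_axioms \<open>B \<subseteq> M\<close> B(2)
        closedin_compact_space[OF compact B(1)] \<open>r > 0\<close>]
    by (intro eventually_conj) simp_all
  then obtain C where "C \<ge> 0" and close: "\<forall>x\<in>B. \<forall>y\<in>B. L' x y > ereal C \<longrightarrow> d x y < r"
    and C: "\<forall>k\<in>F. \<forall>x\<in>A k \<inter> B. \<forall>y\<in>A k \<inter> B. L k x y \<le> L' x y + ereal C \<and> L' x y \<le> L k x y + ereal C"
    unfolding eventually_at_top_linorder by (meson order_refl)
  have "glued x y \<le> L' x y + ereal C \<and> L' x y \<le> glued x y + ereal C" if xy: "x \<in> B" "y \<in> B" for x y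
  proof (cases "\<exists>k\<in>F. x \<in> A k \<and> y \<in> A k")
    case True
    then obtain k where "k \<in> F" "x \<in> A k" "y \<in> A k" "glued x y = L k x y" by (rule glued_chart)
    then show ?thesis using C xy by auto
  next
    case False
    have "\<not> L' x y > ereal C"
    proof
      assume "L' x y > ereal C"
      then have "d x y < r" using close xy by blast
      obtain k where "k \<in> F" and k: "\<forall>z\<in>M. d x z < r \<longrightarrow> z \<in> U k"
        using leb xy(1) \<open>B \<subseteq> M\<close> by blast
      then have "x \<in> U k" "y \<in> U k"
        using \<open>d x y < r\<close> \<open>r > 0\<close> xy \<open>B \<subseteq> M\<close> by auto
      then show False using False \<open>k \<in> F\<close> chart_subset by blast
    qed
    then show ?thesis
      using False nonneg[OF xy] \<open>C \<ge> 0\<close> by (simp add: glued_no_chart add_increasing2 not_less)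
  qed
  then show ?thesis unfolding lipschitz_equiv_on_def by blast
qed

lemma glued_lipschitz_equiv_chart: "k \<in> F \<Longrightarrow> lipschitz_equiv_on (A k) glued (L k)"
  by (intro glued_lipschitz_equiv closedin_chart chart_top_log_scale chart_nonneg chart_lipschitz)

lemma glued_large_if_close:
  assumes "x \<in> M"
  shows "\<exists>r>0. \<forall>y\<in>M. d x y < r \<longrightarrow> glued x y > ereal N"
proof -
  obtain r where "r > 0" and leb: "\<And>x. x \<in> M \<Longrightarrow> \<exists>k\<in>F. \<forall>y\<in>M. d x y < r \<longrightarrow> y \<in> U k"
    using lebesgue_number_charts by metis
  obtain k where "k \<in> F" and k: "\<forall>y\<in>M. d x y < r \<longrightarrow> y \<in> U k"
    using leb[OF assms] by blast
  then have "x \<in> A k" using assms \<open>r > 0\<close> chart_subset[OF \<open>k \<in> F\<close>] by auto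
  obtain C where C: "\<forall>x\<in>A k. \<forall>y\<in>A k. L k x y \<le> glued x y + ereal C"
    using glued_lipschitz_equiv_chart[OF \<open>k \<in> F\<close>] unfolding lipschitz_equiv_on_def by blast
  obtain r' where "r' > 0" and r': "\<forall>y\<in>A k. d x y < r' \<longrightarrow> L k x y > ereal (N + C)"
    using top_log_scale_large_if_close[OF Metric_space_axioms chart_subset_space
        chart_top_log_scale \<open>x \<in> A k\<close>] \<open>k \<in> F\<close> by blast
  have "glued x y > ereal N" if "y \<in> M" "d x y < min r r'" for y
  proof -
    have "y \<in> A k" using k that chart_subset[OF \<open>k \<in> F\<close>] by auto
    then have "ereal (N + C) < glued x y + ereal C"
      using r' C \<open>x \<in> A k\<close> that(2) by (meson min_less_iff_conj order_less_le_trans)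
    then show ?thesis by (cases "glued x y") auto
  qed
  then show ?thesis using \<open>r > 0\<close> \<open>r' > 0\<close> by (intro exI[of _ "min r r'"]) auto
qed

lemma uniform_chart_constant:
  obtains D where "\<And>k x y z. \<lbrakk>k \<in> F; x \<in> A k; y \<in> A k; z \<in> A k\<rbrakk> \<Longrightarrow>
      min (L k x y) (L k y z) - ereal D \<le> L k x z"
    "\<And>k x y. \<lbrakk>k \<in> F; x \<in> A k; y \<in> A k\<rbrakk> \<Longrightarrow>
      glued x y \<le> L k x y + ereal D \<and> L k x y \<le> glued x y + ereal D"
proof -
  have "\<forall>\<^sub>F D in at_top. \<forall>k\<in>F. (\<forall>x\<in>A k. \<forall>y\<in>A k. \<forall>z\<in>A k. min (L k x y) (L k y z) - ereal D \<le> L k x z)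
      \<and> (\<forall>x\<in>A k. \<forall>y\<in>A k. glued x y \<le> L k x y + ereal D \<and> L k x y \<le> glued x y + ereal D)"
    using log_scale_on_eventually[OF chart_log_scale_on]
      lipschitz_equiv_on_eventually[OF glued_lipschitz_equiv_chart]
    by (intro eventually_ball_finite[OF finite_charts] ballI eventually_conj) auto
  then show thesis using that unfolding eventually_at_top_linorder by (meson order_refl)
qed

lemma glued_quasi_ultrametric:
  obtains \<delta> where "\<delta> \<ge> 0"
    "\<And>x y z. \<lbrakk>x \<in> M; y \<in> M; z \<in> M\<rbrakk> \<Longrightarrow> min (glued x y) (glued y z) - ereal \<delta> \<le> glued x z"
proof -
  obtain r where "r > 0" and leb: "\<And>x. x \<in> M \<Longrightarrow> \<exists>k\<in>F. \<forall>y\<in>M. d x y < r \<longrightarrow> y \<in> U k"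
    using lebesgue_number_charts by metis
  obtain N where N: "\<forall>x\<in>M. \<forall>y\<in>M. glued x y > ereal N \<longrightarrow> d x y < r / 2"
    using glued_uniformly_close_if_large[of "r / 2"] \<open>r > 0\<close> by auto
  obtain D where tri: "\<And>k x y z. \<lbrakk>k \<in> F; x \<in> A k; y \<in> A k; z \<in> A k\<rbrakk> \<Longrightarrow>
      min (L k x y) (L k y z) - ereal D \<le> L k x z"
    and lip: "\<And>k x y. \<lbrakk>k \<in> F; x \<in> A k; y \<in> A k\<rbrakk> \<Longrightarrow>
      glued x y \<le> L k x y + ereal D \<and> L k x y \<le> glued x y + ereal D"
    using uniform_chart_constant by metis
  define N\<^sub>0 where "N\<^sub>0 = max N 0"
  define \<delta> where "\<delta> = N\<^sub>0 + \<bar>3 * D\<bar>"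
  have "min (glued x y) (glued y z) - ereal \<delta> \<le> glued x z"
    if xyz: "x \<in> M" "y \<in> M" "z \<in> M" for x y z
    \<comment> \<open>Large values force x, y, z into one chart; small ones are absorbed by \<delta>.\<close>
  proof (cases "glued x y > ereal N\<^sub>0 \<and> glued y z > ereal N\<^sub>0")
    case True
    then have "glued x y > ereal N" "glued y z > ereal N"
      unfolding N\<^sub>0_def by (meson ereal_less_eq(3) max.cobounded1 order_le_less_trans)+
    then have "d x y < r / 2" "d y z < r / 2" using N xyz by blast+
    then have "d y x < r" "d y z < r" using commute[of x y] \<open>r > 0\<close> by linarith+
    moreover obtain k where "k \<in> F" and k: "\<forall>w\<in>M. d y w < r \<longrightarrow> w \<in> U k"
      using leb[OF \<open>y \<in> M\<close>] by blast
    ultimately have "x \<in> A k" "y \<in> A k" "z \<in> A k"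
      using xyz \<open>r > 0\<close> chart_subset[OF \<open>k \<in> F\<close>] by auto
    then have "min (glued x y) (glued y z) - ereal (3 * D) \<le> glued x z"
      using tri lip \<open>k \<in> F\<close> by (intro ereal_min_diff_transfer[of "L k x y" "L k y z" D "L k x z"]) blast+
    moreover have "ereal (3 * D) \<le> ereal \<delta>" unfolding \<delta>_def N\<^sub>0_def by simp
    ultimately show ?thesis by (meson ereal_minus_mono order_refl order_trans)
  next
    case False
    then have "min (glued x y) (glued y z) \<le> ereal N\<^sub>0" by (auto simp: min_le_iff_disj)
    then have "min (glued x y) (glued y z) - ereal \<delta> \<le> ereal N\<^sub>0 - ereal \<delta>"
      by (intro ereal_minus_mono) simp_all
    also have "\<dots> \<le> 0" unfolding \<delta>_def by simp
    finally show ?thesis using glued_nonneg order_trans by blast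
  qed
  moreover have "\<delta> \<ge> 0" unfolding \<delta>_def N\<^sub>0_def by simp
  ultimately show thesis using that by blast
qed

lemma glued_log_scale_on: "log_scale_on M glued"
proof -
  obtain \<delta> where "\<delta> \<ge> 0"
    and tri: "\<And>x y z. \<lbrakk>x \<in> M; y \<in> M; z \<in> M\<rbrakk> \<Longrightarrow> min (glued x y) (glued y z) - ereal \<delta> \<le> glued x z"
    using glued_quasi_ultrametric by metis
  show ?thesis
    unfolding log_scale_on_def
    using glued_commute glued_nonneg glued_eq_infinity_iff \<open>\<delta> \<ge> 0\<close> tri
    by (metis MInfty_neq_ereal(2) ereal_less_eq(7) not_MInfty_nonneg)
qed

lemma top_log_scale_glued: "top_log_scale mtopology glued"
  using top_log_scale_mtopology[OF Metric_space_axioms glued_log_scale_on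
      glued_uniformly_close_if_large glued_large_if_close] .

end

lemma compact_space_finite_subcover:
  assumes "compact_space X" "\<And>i. i \<in> I \<Longrightarrow> openin X (U i)" "topspace X \<subseteq> (\<Union>i\<in>I. U i)"
  obtains F where "F \<subseteq> I" "finite F" "topspace X \<subseteq> (\<Union>i\<in>F. U i)"
proof -
  obtain \<V> where "finite \<V>" "\<V> \<subseteq> U ` I" "topspace X \<subseteq> \<Union>\<V>"
    using compactinD[OF assms(1)[unfolded compact_space_def], of "U ` I"] assms(2,3) by auto
  moreover from this obtain F where "F \<subseteq> I" "finite F" "\<V> = U ` F"
    by (metis finite_subset_image)
  ultimately show thesis using that by blast
qed

theorem theorem1p1p8:
  fixes X :: "'a topology" and I :: "'i set" and U :: "'i \<Rightarrow> 'a set"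
    and L :: "'i \<Rightarrow> 'a \<Rightarrow> 'a \<Rightarrow> ereal"
  assumes "compact_space X" and "metrizable_space X"
    and "\<And>i. i \<in> I \<Longrightarrow> openin X (U i)"
    and "topspace X \<subseteq> (\<Union>i\<in>I. U i)"
    and "\<And>i. i \<in> I \<Longrightarrow> top_log_scale (subtopology X (X closure_of U i)) (L i)"
    and "\<And>i. i \<in> I \<Longrightarrow> positive_log_scale_on (X closure_of U i) (L i)"
    and "\<And>i j. i \<in> I \<Longrightarrow> j \<in> I \<Longrightarrow>
           lipschitz_equiv_on (X closure_of U i \<inter> X closure_of U j) (L i) (L j)"
  shows "\<exists>l. top_log_scale X l \<and>
           (\<forall>i\<in>I. lipschitz_equiv_on (X closure_of U i) l (L i))"
proof -
  obtain M d where "Metric_space M d" and X: "X = Metric_space.mtopology M d"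
    using assms(2) unfolding metrizable_space_def by blast
  obtain F where "F \<subseteq> I" "finite F" and cover: "topspace X \<subseteq> (\<Union>i\<in>F. U i)"
    using compact_space_finite_subcover[OF assms(1,3,4)] by blast
  have nonneg: "L i x y \<ge> 0" if "i \<in> I" "x \<in> X closure_of U i" "y \<in> X closure_of U i" for i x y
    using assms(6)[OF that(1)] that(2,3) unfolding positive_log_scale_on_def by force
  interpret atlas: log_scale_atlas M d F U "\<lambda>i. X closure_of U i" L
  proof (intro log_scale_atlas.intro[OF \<open>Metric_space M d\<close>] log_scale_atlas_axioms.intro;
      (unfold X[symmetric])?)
    fix k assume "k \<in> F"
    then have "k \<in> I" using \<open>F \<subseteq> I\<close> by blast
    show "openin X (U k)" by (rule assms(3)[OF \<open>k \<in> I\<close>])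
    then show "U k \<subseteq> X closure_of U k" by (intro closure_of_subset openin_subset)
    show "top_log_scale (subtopology X (X closure_of U k)) (L k)" by (rule assms(5)[OF \<open>k \<in> I\<close>])
    show "L k x y \<ge> 0" if "x \<in> X closure_of U k" "y \<in> X closure_of U k" for x y
      by (rule nonneg[OF \<open>k \<in> I\<close> that])
    show "lipschitz_equiv_on (X closure_of U k \<inter> X closure_of U k') (L k) (L k')" if "k' \<in> F" for k'
      using assms(7) \<open>k \<in> I\<close> that \<open>F \<subseteq> I\<close> by blast
  next
    show "M \<subseteq> (\<Union>i\<in>F. U i)"
      using cover X Metric_space.topspace_mtopology[OF \<open>Metric_space M d\<close>] by simp
  qed (simp_all add: assms(1) \<open>finite F\<close>)
  have "lipschitz_equiv_on (X closure_of U i) atlas.glued (L i)" if "i \<in> I" for i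
    using assms(5,7) nonneg that \<open>F \<subseteq> I\<close>
    by (intro atlas.glued_lipschitz_equiv) (auto simp flip: X)
  then show ?thesis using atlas.top_log_scale_glued unfolding X[symmetric] by blast
qed

end
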